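(* Consider the network with vertices $s_1,s_2,s_3,t$ and directed edges $(s_3,s_1),(s_3,s_2),(s_1,t),(s_2,t)$, messages $X_1^k,X_2^k,X_3^k$ with all $3k$ components i.i.d. uniform on a finite alphabet $\mathcal{A}$, a demand function $f:\mathcal{A}^3\to\mathcal{B}$ applied componentwise, and a source-network code computing $f(X_1^k,X_2^k,X_3^k)$ at $t$ with zero error. Let $\mathbf{b}\in\mathcal{B}^k$ and $\mathbf{a}_3\in A_3(\mathbf{b})$. Define the vector $\mathbf{h}_{\mathbf{b},\mathbf{a}_3}\in\mathbb{R}^{M(\mathbf{a}_3,\mathbf{b})}$ whose first $|\mathcal{V}_{12}(\mathbf{a}_3,\mathbf{b})|$ entries are the numbers $h_{\mathbf{a}_3}(C,D)$, $(C,D)\in\mathcal{V}_{12}(\mathbf{a}_3,\mathbf{b})$, listed in non-increasing order, followed by $M(\mathbf{a}_3,\mathbf{b})-|\mathcal{V}_{12}(\mathbf{a}_3,\mathbf{b})|$ zeros. Then every conditional p.m.f. $\mathbf{p}\in\mathbb{R}_{\ge0}^{M(\mathbf{a}_3,\mathbf{b})}$ on the $M(\mathbf{a}_3,\mathbf{b})$ valid $(\mathbf{z}_1,\mathbf{z}_2)$-labels, given $f(X_1^k,X_2^k,X_3^k)=\mathbf{b}$ and $X_3^k=\mathbf{a}_3$, satisfies $\mathbf{p}\prec\mathbf{h}_{\mathbf{b},\mathbf{a}_3}/|A_{123}(\mathbf{b},\mathbf{a}_3)|$.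
   Context: A source-network code consists of encoders $\phi_{(s_3,s_1)},\phi_{(s_3,s_2)}:\mathcal{A}^k\to\mathcal{Z}^*$, $\phi_{(s_1,t)},\phi_{(s_2,t)}:\mathcal{A}^k\times\mathcal{Z}^*\to\mathcal{Z}^*$ ($\mathcal{Z}^*$ = finite sequences over a finite alphabet $\mathcal{Z}$) and a decoder $\psi_t$; $\mathbf{Z}_u=\phi_{(s_u,t)}(X_u^k,\phi_{(s_3,s_u)}(X_3^k))$, $u=1,2$; zero error means $\Pr\{\psi_t(\mathbf{Z}_1,\mathbf{Z}_2)\ne f(X_1^k,X_2^k,X_3^k)\}=0$. For $a_3\in\mathcal{A}$: $x\equiv^{a_3}y|_1$ iff $f(x,z,a_3)=f(y,z,a_3)$ for all $z\in\mathcal{A}$; $x\equiv^{a_3}y|_2$ iff $f(z,x,a_3)=f(z,y,a_3)$ for all $z$. For vectors, $\mathbf{x}_u\equiv^{\mathbf{a}_3}\mathbf{y}_u|_u$ iff componentwise equivalent under $\equiv^{a_3^{(j)}}|_u$. $A_3(\mathbf{b})=\{\mathbf{a}_3\in\mathcal{A}^k:\exists\mathbf{x}_1,\mathbf{x}_2,\ f(\mathbf{x}_1,\mathbf{x}_2,\mathbf{a}_3)=\mathbf{b}\}$; $A_{123}(\mathbf{b},\mathbf{a}_3)$ is the set of message tuples $(\mathbf{x}_1,\mathbf{x}_2,\mathbf{a}_3)$ with $f(\mathbf{x}_1,\mathbf{x}_2,\mathbf{a}_3)=\mathbf{b}$. $\mathcal{V}_{12}(\mathbf{a}_3,\mathbf{b})$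 is the set of pairs $(C,D)$ where $C$ is a class of $\equiv^{\mathbf{a}_3}|_1$, $D$ a class of $\equiv^{\mathbf{a}_3}|_2$, and there exist $\mathbf{x}_1\in C,\mathbf{x}_2\in D$ with $f(\mathbf{x}_1,\mathbf{x}_2,\mathbf{a}_3)=\mathbf{b}$; for such a pair, $h_{\mathbf{a}_3}(C,D)=|\{(\mathbf{x}_1,\mathbf{x}_2)\in C\times D: f(\mathbf{x}_1,\mathbf{x}_2,\mathbf{a}_3)=\mathbf{b}\}|$ (which equals $|C|\cdot|D|$). $M(\mathbf{a}_3,\mathbf{b})$ is the number of distinct pairs $(\mathbf{Z}_1,\mathbf{Z}_2)$ used by the code on tuples in $A_{123}(\mathbf{b},\mathbf{a}_3)$; for a zero-error code $M(\mathbf{a}_3,\mathbf{b})\ge|\mathcal{V}_{12}(\mathbf{a}_3,\mathbf{b})|$. Majorization: $\mathbf{p}\prec\mathbf{q}$ (same length $l$) iff the sum of the $t$ largest entries of $\mathbf{p}$ is at most that of $\mathbf{q}$ for $t=1,\ldots,l-1$ and the total sums are equal. *)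

theory Defs
  imports Complex_Main "HOL-Library.Multiset"
begin

definition vecs :: "nat \<Rightarrow> 'a list set" where
  "vecs k = {xs. length xs = k}"

definition fvec :: "('a \<Rightarrow> 'a \<Rightarrow> 'a \<Rightarrow> 'b) \<Rightarrow> 'a list \<Rightarrow> 'a list \<Rightarrow> 'a list \<Rightarrow> 'b list" where
  "fvec f x1 x2 x3 = map (\<lambda>j. f (x1 ! j) (x2 ! j) (x3 ! j)) [0..<length x3]"

definition eq1 :: "('a \<Rightarrow> 'a \<Rightarrow> 'a \<Rightarrow> 'b) \<Rightarrow> 'a \<Rightarrow> 'a \<Rightarrow> 'a \<Rightarrow> bool" where
  "eq1 f a3 x y \<longleftrightarrow> (\<forall>z. f x z a3 = f y z a3)"

definition eq2 :: "('a \<Rightarrow> 'a \<Rightarrow> 'a \<Rightarrow> 'b) \<Rightarrow> 'a \<Rightarrow> 'a \<Rightarrow> 'a \<Rightarrow> bool" where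
  "eq2 f a3 x y \<longleftrightarrow> (\<forall>z. f z x a3 = f z y a3)"

definition veq1 :: "('a \<Rightarrow> 'a \<Rightarrow> 'a \<Rightarrow> 'b) \<Rightarrow> 'a list \<Rightarrow> 'a list \<Rightarrow> 'a list \<Rightarrow> bool" where
  "veq1 f a3 x y \<longleftrightarrow> length x = length a3 \<and> length y = length a3 \<and>
     (\<forall>j<length a3. eq1 f (a3 ! j) (x ! j) (y ! j))"

definition veq2 :: "('a \<Rightarrow> 'a \<Rightarrow> 'a \<Rightarrow> 'b) \<Rightarrow> 'a list \<Rightarrow> 'a list \<Rightarrow> 'a list \<Rightarrow> bool" where
  "veq2 f a3 x y \<longleftrightarrow> length x = length a3 \<and> length y = length a3 \<and>
     (\<forall>j<length a3. eq2 f (a3 ! j) (x ! j) (y ! j))"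

definition classes1 :: "('a \<Rightarrow> 'a \<Rightarrow> 'a \<Rightarrow> 'b) \<Rightarrow> 'a list \<Rightarrow> 'a list set set" where
  "classes1 f a3 = (\<lambda>x. {y. veq1 f a3 x y}) ` vecs (length a3)"

definition classes2 :: "('a \<Rightarrow> 'a \<Rightarrow> 'a \<Rightarrow> 'b) \<Rightarrow> 'a list \<Rightarrow> 'a list set set" where
  "classes2 f a3 = (\<lambda>x. {y. veq2 f a3 x y}) ` vecs (length a3)"

definition A3 :: "('a \<Rightarrow> 'a \<Rightarrow> 'a \<Rightarrow> 'b) \<Rightarrow> nat \<Rightarrow> 'b list \<Rightarrow> 'a list set" where
  "A3 f k b = {a3 \<in> vecs k. \<exists>x1\<in>vecs k. \<exists>x2\<in>vecs k. fvec f x1 x2 a3 = b}"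

definition A123 :: "('a \<Rightarrow> 'a \<Rightarrow> 'a \<Rightarrow> 'b) \<Rightarrow> 'b list \<Rightarrow> 'a list \<Rightarrow> ('a list \<times> 'a list \<times> 'a list) set" where
  "A123 f b a3 = {(x1, x2, x3). x1 \<in> vecs (length a3) \<and> x2 \<in> vecs (length a3) \<and> x3 = a3 \<and>
                    fvec f x1 x2 a3 = b}"

definition V12 :: "('a \<Rightarrow> 'a \<Rightarrow> 'a \<Rightarrow> 'b) \<Rightarrow> 'a list \<Rightarrow> 'b list \<Rightarrow> ('a list set \<times> 'a list set) set" where
  "V12 f a3 b = {(C, D). C \<in> classes1 f a3 \<and> D \<in> classes2 f a3 \<and>
                   (\<exists>x1\<in>C. \<exists>x2\<in>D. fvec f x1 x2 a3 = b)}"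

definition hval :: "('a \<Rightarrow> 'a \<Rightarrow> 'a \<Rightarrow> 'b) \<Rightarrow> 'a list \<Rightarrow> 'b list \<Rightarrow> 'a list set \<times> 'a list set \<Rightarrow> nat" where
  "hval f a3 b CD = card {(x1, x2). x1 \<in> fst CD \<and> x2 \<in> snd CD \<and> fvec f x1 x2 a3 = b}"

(* message received at t over edge (s_u, t) *)
definition Zmsg :: "('a list \<Rightarrow> 'z list \<Rightarrow> 'z list) \<Rightarrow> ('a list \<Rightarrow> 'z list) \<Rightarrow> 'a list \<Rightarrow> 'a list \<Rightarrow> 'z list" where
  "Zmsg phi_t phi_s xu x3 = phi_t xu (phi_s x3)"

definition label ::
  "('a list \<Rightarrow> 'z list) \<Rightarrow> ('a list \<Rightarrow> 'z list) \<Rightarrow> ('a list \<Rightarrow> 'z list \<Rightarrow> 'z list) \<Rightarrow>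
   ('a list \<Rightarrow> 'z list \<Rightarrow> 'z list) \<Rightarrow> 'a list \<times> 'a list \<times> 'a list \<Rightarrow> 'z list \<times> 'z list" where
  "label phi31 phi32 phi1t phi2t w =
     (case w of (x1, x2, x3) \<Rightarrow> (Zmsg phi1t phi31 x1 x3, Zmsg phi2t phi32 x2 x3))"

(* zero-error (all message tuples have positive probability under the i.i.d. uniform law) *)
definition zero_error ::
  "nat \<Rightarrow> ('a \<Rightarrow> 'a \<Rightarrow> 'a \<Rightarrow> 'b) \<Rightarrow> ('a list \<Rightarrow> 'z list) \<Rightarrow> ('a list \<Rightarrow> 'z list) \<Rightarrow>
   ('a list \<Rightarrow> 'z list \<Rightarrow> 'z list) \<Rightarrow> ('a list \<Rightarrow> 'z list \<Rightarrow> 'z list) \<Rightarrow>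
   ('z list \<Rightarrow> 'z list \<Rightarrow> 'b list) \<Rightarrow> bool" where
  "zero_error k f phi31 phi32 phi1t phi2t psi \<longleftrightarrow>
     (\<forall>x1\<in>vecs k. \<forall>x2\<in>vecs k. \<forall>x3\<in>vecs k.
        psi (Zmsg phi1t phi31 x1 x3) (Zmsg phi2t phi32 x2 x3) = fvec f x1 x2 x3)"

definition Mnum ::
  "('a \<Rightarrow> 'a \<Rightarrow> 'a \<Rightarrow> 'b) \<Rightarrow> ('a list \<Rightarrow> 'z list) \<Rightarrow> ('a list \<Rightarrow> 'z list) \<Rightarrow>
   ('a list \<Rightarrow> 'z list \<Rightarrow> 'z list) \<Rightarrow> ('a list \<Rightarrow> 'z list \<Rightarrow> 'z list) \<Rightarrow> 'a list \<Rightarrow> 'b list \<Rightarrow> nat" where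
  "Mnum f phi31 phi32 phi1t phi2t a3 b = card (label phi31 phi32 phi1t phi2t ` A123 f b a3)"

definition hvec ::
  "('a \<Rightarrow> 'a \<Rightarrow> 'a \<Rightarrow> 'b) \<Rightarrow> ('a list \<Rightarrow> 'z list) \<Rightarrow> ('a list \<Rightarrow> 'z list) \<Rightarrow>
   ('a list \<Rightarrow> 'z list \<Rightarrow> 'z list) \<Rightarrow> ('a list \<Rightarrow> 'z list \<Rightarrow> 'z list) \<Rightarrow> 'b list \<Rightarrow> 'a list \<Rightarrow> real list" where
  "hvec f phi31 phi32 phi1t phi2t b a3 =
     rev (sorted_list_of_multiset (image_mset (\<lambda>CD. real (hval f a3 b CD)) (mset_set (V12 f a3 b))))
     @ replicate (Mnum f phi31 phi32 phi1t phi2t a3 b - card (V12 f a3 b)) 0"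

definition topsum :: "nat \<Rightarrow> real list \<Rightarrow> real" where
  "topsum t xs = sum_list (take t (rev (sort xs)))"

definition majorized :: "real list \<Rightarrow> real list \<Rightarrow> bool" where
  "majorized p q \<longleftrightarrow> length p = length q \<and>
     (\<forall>t\<in>{1..<length p}. topsum t p \<le> topsum t q) \<and> sum_list p = sum_list q"

end

theory Submission
  imports Defs "HOL-Library.FuncSet"
begin

text \<open>
  Zero error forces the label (z1, z2) of a tuple in A123(b, a3) to determine the
  pair of classes (C, D) containing (x1, x2): if x1 and y1 produce the same z1, the
  decoder gives the same output against every x2, so f cannot separate x1 from y1.
  Hence every block (C, D), of mass h(C, D), is a disjoint union of label fibres, and
  the vector h arises from the label distribution by merging entries and padding with
  zeros. Merging entries of a nonnegative vector can only increase the sum of its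
  t largest entries while preserving the total, which is the majorization.
\<close>

lemma sum_mset_le_sum_take:
  fixes ys :: "real list"
  assumes "sorted_wrt (\<ge>) ys" "\<forall>y\<in>set ys. 0 \<le> y" "M \<subseteq># mset ys" "size M \<le> t"
  shows "sum_mset M \<le> sum_list (take t ys)"
  using assms
proof (induction ys arbitrary: t M)
  case Nil
  then show ?case by simp
next
  case (Cons y ys)
  then have IH: "\<And>t M. M \<subseteq># mset ys \<Longrightarrow> size M \<le> t \<Longrightarrow>
      sum_mset M \<le> sum_list (take t ys)"
    by simp
  have rest: "M - {#y#} \<subseteq># mset ys"
    using Cons.prems(3) by (simp add: subset_eq_diff_conv)
  show ?case
  proof (cases t)
    case 0
    then show ?thesis using Cons.prems(4) by simp
  next
    case (Suc t')
    show ?thesis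
    proof (cases "y \<in># M")
      case True
      have "sum_mset (M - {#y#}) \<le> sum_list (take t' ys)"
        using rest True Cons.prems(4) Suc by (intro IH) (auto simp: size_Diff_singleton)
      then show ?thesis using True Suc by (simp add: sum_mset.remove)
    next
      case False
      with rest have sub: "M \<subseteq># mset ys" by (simp add: diff_single_trivial)
      show ?thesis
      proof (cases "M = {#}")
        case True
        then show ?thesis
          using Cons.prems(2) by (fastforce intro!: sum_list_nonneg dest: in_set_takeD)
      next
        case False
        then obtain m where m: "m \<in># M" by blast
        have "m \<le> y" using Cons.prems(1) mset_subset_eqD[OF sub m] by simp
        moreover have "sum_mset (M - {#m#}) \<le> sum_list (take t' ys)"
          using sub m Cons.prems(4) Suc
          by (intro IH)
            (auto simp: size_Diff_singleton intro: subset_mset.order_trans[OF diff_subset_eq_self])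
        ultimately show ?thesis using m Suc by (simp add: sum_mset.remove)
      qed
    qed
  qed
qed

lemma sum_mset_le_topsum:
  assumes "\<forall>x\<in>set xs. 0 \<le> x" "M \<subseteq># mset xs" "size M \<le> t"
  shows "sum_mset M \<le> topsum t xs"
  unfolding topsum_def by (rule sum_mset_le_sum_take) (use assms in \<open>auto simp: sorted_wrt_rev\<close>)

lemma sort_map_eq_map_sort_key: "sort (map g xs) = map g (sort_key g xs)"
  by (rule properties_for_sort) (simp_all add: mset_map)

lemma topsum_map_eq_sum_subset:
  assumes "distinct ls"
  obtains S where "S \<subseteq> set ls" "card S \<le> t" "topsum t (map g ls) = sum g S"
proof
  let ?top = "take t (rev (sort_key g ls))"
  show "set ?top \<subseteq> set ls" by (auto dest: in_set_takeD)
  show "card (set ?top) \<le> t" using card_length[of ?top] by simp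
  have "distinct ?top" using assms by simp
  then show "topsum t (map g ls) = sum g (set ?top)"
    by (simp add: topsum_def sort_map_eq_map_sort_key take_map rev_map sum_list_distinct_conv_sum_set)
qed

lemma sum_le_sum_merged:
  fixes g :: "'l \<Rightarrow> real"
  assumes "finite L" "S \<subseteq> L" "\<And>l. l \<in> L \<Longrightarrow> 0 \<le> g l"
  shows "sum g S \<le> (\<Sum>c\<in>F ` S. \<Sum>l\<in>{l \<in> L. F l = c}. g l)"
proof -
  let ?R = "{l \<in> L. F l \<in> F ` S}"
  have "sum g S \<le> sum g ?R"
    using assms by (intro sum_mono2) auto
  also have "\<dots> = (\<Sum>c\<in>F ` S. \<Sum>l\<in>{l \<in> ?R. F l = c}. g l)"
    using assms(1,2) by (intro sum.group [symmetric]) (auto intro: finite_subset)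
  also have "\<dots> = (\<Sum>c\<in>F ` S. \<Sum>l\<in>{l \<in> L. F l = c}. g l)"
    by (intro sum.cong) auto
  finally show ?thesis .
qed

lemma card_fibre_comp_eq_sum:
  assumes "finite A"
  shows "card {x \<in> A. F (g x) = c} = (\<Sum>l\<in>{l \<in> g ` A. F l = c}. card {x \<in> A. g x = l})"
proof -
  have "{x \<in> A. F (g x) = c} = (\<Union>l\<in>{l \<in> g ` A. F l = c}. {x \<in> A. g x = l})"
    by auto
  also have "card \<dots> = (\<Sum>l\<in>{l \<in> g ` A. F l = c}. card {x \<in> A. g x = l})"
    using assms by (intro card_UN_disjoint) auto
  finally show ?thesis .
qed

lemma majorized_merge:
  fixes ls :: "'l list" and g :: "'l \<Rightarrow> real" and F :: "'l \<Rightarrow> 'c"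
  defines "w \<equiv> \<lambda>c. \<Sum>l\<in>{l \<in> set ls. F l = c}. g l"
  assumes "distinct ls" "\<And>l. l \<in> set ls \<Longrightarrow> 0 \<le> g l"
    and q: "mset q = image_mset w (mset_set (F ` set ls)) + replicate_mset (length ls - card (F ` set ls)) 0"
  shows "majorized (map g ls) q"
  unfolding majorized_def
proof (intro conjI ballI)
  have "card (F ` set ls) \<le> length ls"
    using card_image_le[of "set ls" F] card_length[of ls] by simp
  then show "length (map g ls) = length q"
    using q by (simp flip: size_mset)
  have "sum_list (map g ls) = sum g (set ls)"
    using assms(2) by (simp add: sum_list_distinct_conv_sum_set)
  also have "\<dots> = sum w (F ` set ls)"
    unfolding w_def by (rule sum.image_gen) simp
  also have "\<dots> = sum_list q"
    by (simp flip: sum_mset_sum_list add: q sum_unfold_sum_mset)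
  finally show "sum_list (map g ls) = sum_list q" .
  have q_nonneg: "\<forall>x\<in>set q. 0 \<le> x"
  proof
    fix x assume "x \<in> set q"
    then have "x \<in># mset q" by simp
    then show "0 \<le> x" using assms(3) by (auto simp: q w_def split: if_splits intro!: sum_nonneg)
  qed
  fix t
  obtain S where S: "S \<subseteq> set ls" "card S \<le> t" "topsum t (map g ls) = sum g S"
    using topsum_map_eq_sum_subset assms(2) by blast
  have "sum g S \<le> sum w (F ` S)"
    unfolding w_def using S(1) assms(3) by (intro sum_le_sum_merged) auto
  also have "\<dots> \<le> topsum t q"
  proof -
    have "image_mset w (mset_set (F ` S)) \<subseteq># image_mset w (mset_set (F ` set ls))"
      using S(1) by (intro image_mset_subseteq_mono subset_imp_msubset_mset_set) auto
    then have "image_mset w (mset_set (F ` S)) \<subseteq># mset q"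
      by (simp add: q subset_mset.add_increasing2)
    moreover have "card (F ` S) \<le> t"
      using S(2) card_image_le[of S F] finite_subset[OF S(1)] by simp
    ultimately show ?thesis
      using sum_mset_le_topsum[OF q_nonneg] by (simp add: sum_unfold_sum_mset)
  qed
  finally show "topsum t (map g ls) \<le> topsum t q" using S(3) by simp
qed

lemma finite_vecs: "finite (vecs k :: 'a::finite list set)"
  using finite_lists_length_eq[of "UNIV :: 'a set" k] by (simp add: vecs_def)

lemma finite_A123: "finite (A123 f b (a3 :: 'a::finite list))"
proof (rule finite_subset)
  show "A123 f b a3 \<subseteq> vecs (length a3) \<times> vecs (length a3) \<times> {a3}"
    by (auto simp: A123_def)
qed (simp add: finite_vecs)

lemma veq2_eq_veq1_swap: "veq2 f = veq1 (\<lambda>x y. f y x)"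
  by (simp add: fun_eq_iff veq1_def veq2_def eq1_def eq2_def)

lemma classes2_eq_classes1_swap: "classes2 f = classes1 (\<lambda>x y. f y x)"
  by (simp add: fun_eq_iff classes1_def classes2_def veq2_eq_veq1_swap)

lemma zero_error_swap:
  assumes "zero_error k f phi31 phi32 phi1t phi2t psi"
  shows "zero_error k (\<lambda>x y. f y x) phi32 phi31 phi2t phi1t (\<lambda>z1 z2. psi z2 z1)"
  using assms by (simp add: zero_error_def fvec_def)

lemma zero_error_imp_veq1:
  fixes f :: "'a \<Rightarrow> 'a \<Rightarrow> 'a \<Rightarrow> 'b"
  assumes ze: "zero_error k f phi31 phi32 phi1t phi2t psi" and a3: "a3 \<in> vecs k"
    and x1: "x1 \<in> vecs k" and y1: "y1 \<in> vecs k"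
    and same: "Zmsg phi1t phi31 x1 a3 = Zmsg phi1t phi31 y1 a3"
  shows "veq1 f a3 x1 y1"
  unfolding veq1_def eq1_def
proof (intro conjI allI impI)
  show "length x1 = length a3" "length y1 = length a3"
    using a3 x1 y1 by (simp_all add: vecs_def)
  fix j and z :: 'a assume j: "j < length a3"
  have x2: "replicate k z \<in> vecs k" by (simp add: vecs_def)
  have "fvec f x1 (replicate k z) a3 = fvec f y1 (replicate k z) a3"
    using ze a3 x1 y1 x2 same unfolding zero_error_def by metis
  then show "f (x1 ! j) z (a3 ! j) = f (y1 ! j) z (a3 ! j)"
    using j a3 by (auto simp: fvec_def vecs_def dest: arg_cong[where f = "\<lambda>v. v ! j"])
qed

lemma zero_error_imp_veq2:
  assumes "zero_error k f phi31 phi32 phi1t phi2t psi" "a3 \<in> vecs k"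
    and "x2 \<in> vecs k" "y2 \<in> vecs k"
    and "Zmsg phi2t phi32 x2 a3 = Zmsg phi2t phi32 y2 a3"
  shows "veq2 f a3 x2 y2"
  unfolding veq2_eq_veq1_swap by (rule zero_error_imp_veq1[OF zero_error_swap[OF assms(1)] assms(2-)])

lemma veq1_sym: "veq1 f a3 x y \<Longrightarrow> veq1 f a3 y x"
  by (simp add: veq1_def eq1_def)

lemma veq1_trans: "veq1 f a3 x y \<Longrightarrow> veq1 f a3 y z \<Longrightarrow> veq1 f a3 x z"
  by (simp add: veq1_def eq1_def)

lemma veq1_imp_class_eq: "veq1 f a3 x y \<Longrightarrow> {z. veq1 f a3 x z} = {z. veq1 f a3 y z}"
  by (blast intro: veq1_trans veq1_sym)

lemma veq2_imp_class_eq: "veq2 f a3 x y \<Longrightarrow> {z. veq2 f a3 x z} = {z. veq2 f a3 y z}"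
  unfolding veq2_eq_veq1_swap by (rule veq1_imp_class_eq)

lemma mem_classes1_iff:
  assumes "C \<in> classes1 f a3"
  shows "x \<in> C \<longleftrightarrow> length x = length a3 \<and> C = {y. veq1 f a3 x y}"
proof -
  obtain x0 where C: "C = {y. veq1 f a3 x0 y}"
    using assms by (auto simp: classes1_def)
  show ?thesis
  proof
    assume "x \<in> C"
    then have x0x: "veq1 f a3 x0 x" by (simp add: C)
    then have "length x = length a3" by (simp add: veq1_def)
    moreover have "{y. veq1 f a3 x0 y} = {y. veq1 f a3 x y}"
      using x0x by (rule veq1_imp_class_eq)
    ultimately show "length x = length a3 \<and> C = {y. veq1 f a3 x y}" by (simp add: C)
  qed (simp add: veq1_def eq1_def)
qed

lemma mem_classes2_iff:
  assumes "C \<in> classes2 f a3"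
  shows "x \<in> C \<longleftrightarrow> length x = length a3 \<and> C = {y. veq2 f a3 x y}"
  using assms unfolding classes2_eq_classes1_swap veq2_eq_veq1_swap by (rule mem_classes1_iff)

definition block ::
  "('a \<Rightarrow> 'a \<Rightarrow> 'a \<Rightarrow> 'b) \<Rightarrow> 'a list \<Rightarrow> 'a list \<times> 'a list \<times> 'a list \<Rightarrow>
   'a list set \<times> 'a list set" where
  "block f a3 w = (case w of (x1, x2, _) \<Rightarrow> ({y. veq1 f a3 x1 y}, {y. veq2 f a3 x2 y}))"

lemma V12_eq_image_block: "V12 f a3 b = block f a3 ` A123 f b a3"
proof
  show "V12 f a3 b \<subseteq> block f a3 ` A123 f b a3"
  proof
    fix CD assume "CD \<in> V12 f a3 b"
    then obtain C D x1 x2 where CD: "CD = (C, D)" "C \<in> classes1 f a3" "D \<in> classes2 f a3"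
      and x: "x1 \<in> C" "x2 \<in> D" "fvec f x1 x2 a3 = b"
      by (auto simp: V12_def)
    then have "(x1, x2, a3) \<in> A123 f b a3" "block f a3 (x1, x2, a3) = CD"
      by (auto simp: A123_def block_def vecs_def mem_classes1_iff mem_classes2_iff)
    then show "CD \<in> block f a3 ` A123 f b a3" by blast
  qed
  show "block f a3 ` A123 f b a3 \<subseteq> V12 f a3 b"
  proof (rule image_subsetI)
    fix w assume "w \<in> A123 f b a3"
    then obtain x1 x2 where x: "w = (x1, x2, a3)" "x1 \<in> vecs (length a3)" "x2 \<in> vecs (length a3)"
      "fvec f x1 x2 a3 = b"
      by (auto simp: A123_def)
    have "{y. veq1 f a3 x1 y} \<in> classes1 f a3" "{y. veq2 f a3 x2 y} \<in> classes2 f a3"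
      using x by (auto simp: classes1_def classes2_def)
    moreover have "x1 \<in> {y. veq1 f a3 x1 y}" "x2 \<in> {y. veq2 f a3 x2 y}"
      using x by (auto simp: vecs_def veq1_def eq1_def veq2_def eq2_def)
    ultimately show "block f a3 w \<in> V12 f a3 b"
      using x by (auto simp: V12_def block_def)
  qed
qed

lemma hval_eq_card_block:
  assumes "C \<in> classes1 f a3" "D \<in> classes2 f a3"
  shows "hval f a3 b (C, D) = card {w \<in> A123 f b a3. block f a3 w = (C, D)}"
proof -
  let ?pairs = "{(x1, x2). x1 \<in> C \<and> x2 \<in> D \<and> fvec f x1 x2 a3 = b}"
  have "{w \<in> A123 f b a3. block f a3 w = (C, D)} = (\<lambda>(x1, x2). (x1, x2, a3)) ` ?pairs"
    using assms by (auto simp: A123_def block_def vecs_def mem_classes1_iff mem_classes2_iff)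
  moreover have "inj_on (\<lambda>(x1, x2). (x1, x2, a3)) ?pairs"
    by (auto intro: inj_onI)
  ultimately show ?thesis by (simp add: hval_def card_image)
qed

lemma hval_eq_sum_fibres:
  fixes a3 :: "'a::finite list" and lab :: "'a list \<times> 'a list \<times> 'a list \<Rightarrow> 'l"
  assumes "\<forall>w\<in>A123 f b a3. block f a3 w = F (lab w)" "c \<in> V12 f a3 b"
  shows "hval f a3 b c =
    (\<Sum>l\<in>{l \<in> lab ` A123 f b a3. F l = c}. card {w \<in> A123 f b a3. lab w = l})"
proof -
  obtain C D where "c = (C, D)" "C \<in> classes1 f a3" "D \<in> classes2 f a3"
    using assms(2) by (auto simp: V12_def)
  then have "hval f a3 b c = card {w \<in> A123 f b a3. block f a3 w = c}"
    by (simp add: hval_eq_card_block)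
  also have "{w \<in> A123 f b a3. block f a3 w = c} = {w \<in> A123 f b a3. F (lab w) = c}"
    using assms(1) by auto
  finally show ?thesis by (simp add: card_fibre_comp_eq_sum finite_A123)
qed

lemma block_eq_if_label_eq:
  assumes ze: "zero_error k f phi31 phi32 phi1t phi2t psi" and a3: "a3 \<in> vecs k"
    and "w \<in> A123 f b a3" "w' \<in> A123 f b a3"
    and "label phi31 phi32 phi1t phi2t w = label phi31 phi32 phi1t phi2t w'"
  shows "block f a3 w = block f a3 w'"
proof -
  obtain x1 x2 y1 y2 where w: "w = (x1, x2, a3)" "w' = (y1, y2, a3)"
    and vecs: "x1 \<in> vecs k" "x2 \<in> vecs k" "y1 \<in> vecs k" "y2 \<in> vecs k"
    using assms(3,4) a3 by (auto simp: A123_def vecs_def)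
  have "veq1 f a3 x1 y1" "veq2 f a3 x2 y2"
    using assms(5) w vecs
    by (auto simp: label_def intro: zero_error_imp_veq1[OF ze a3] zero_error_imp_veq2[OF ze a3])
  then show ?thesis
    using w by (simp add: block_def veq1_imp_class_eq veq2_imp_class_eq)
qed

theorem lemma6:
  fixes k :: nat
    and f :: "'a::finite \<Rightarrow> 'a \<Rightarrow> 'a \<Rightarrow> 'b"
    and phi31 phi32 :: "'a list \<Rightarrow> 'z::finite list"
    and phi1t phi2t :: "'a list \<Rightarrow> 'z list \<Rightarrow> 'z list"
    and psi :: "'z list \<Rightarrow> 'z list \<Rightarrow> 'b list"
    and b :: "'b list" and a3 :: "'a list"
    and ls :: "('z list \<times> 'z list) list"
  assumes "zero_error k f phi31 phi32 phi1t phi2t psi"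
    and "length b = k"
    and "a3 \<in> A3 f k b"
    and "distinct ls"
    and "set ls = label phi31 phi32 phi1t phi2t ` A123 f b a3"
  shows "majorized
           (map (\<lambda>l. real (card {w \<in> A123 f b a3. label phi31 phi32 phi1t phi2t w = l})
                      / real (card (A123 f b a3))) ls)
           (map (\<lambda>x. x / real (card (A123 f b a3))) (hvec f phi31 phi32 phi1t phi2t b a3))"
proof -
  let ?A = "A123 f b a3" and ?lab = "label phi31 phi32 phi1t phi2t"
    and ?h = "hvec f phi31 phi32 phi1t phi2t b a3"
  define g where "g = (\<lambda>l. real (card {w \<in> ?A. ?lab w = l}) / real (card ?A))"
  have a3: "a3 \<in> vecs k" using assms(3) by (simp add: A3_def)
  obtain F where F: "\<forall>w\<in>?A. block f a3 w = F (?lab w)"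
    using function_factors_left_gen[of "\<lambda>w. w \<in> ?A" ?lab "block f a3"]
      block_eq_if_label_eq[OF assms(1) a3] by blast
  have V12_eq: "V12 f a3 b = F ` set ls"
    using F by (force simp: V12_eq_image_block assms(5))
  have hval_eq: "real (hval f a3 b c) / real (card ?A) = (\<Sum>l\<in>{l \<in> set ls. F l = c}. g l)"
    if "c \<in> V12 f a3 b" for c
    using hval_eq_sum_fibres[where F = F and lab = ?lab, OF F that]
    by (simp add: assms(5) g_def sum_divide_distrib)
  have "Mnum f phi31 phi32 phi1t phi2t a3 b = length ls"
    using distinct_card[OF assms(4)] by (simp add: Mnum_def assms(5))
  then have "mset (map (\<lambda>x. x / real (card ?A)) ?h) =
      image_mset (\<lambda>c. real (hval f a3 b c) / real (card ?A)) (mset_set (V12 f a3 b))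
      + replicate_mset (length ls - card (V12 f a3 b)) 0"
    by (simp add: hvec_def mset_map image_mset.compositionality comp_def)
  also have "\<dots> = image_mset (\<lambda>c. \<Sum>l\<in>{l \<in> set ls. F l = c}. g l) (mset_set (F ` set ls))
      + replicate_mset (length ls - card (F ` set ls)) 0"
    unfolding V12_eq
    by (intro arg_cong2[where f = "(+)"] image_mset_cong) (simp_all add: hval_eq[unfolded V12_eq])
  finally have "majorized (map g ls) (map (\<lambda>x. x / real (card ?A)) ?h)"
    using assms(4) by (intro majorized_merge) (simp_all add: g_def)
  then show ?thesis unfolding g_def .
qed

end
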